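(* Let $m,n\geq1$. The graph $\Gamma_m^n$ is bipartite with respect to the decomposition of its vertex set into the vertices $e_\lambda$ with $|\lambda|$ even and those with $|\lambda|$ odd. In particular, paths in $\Gamma_m^n$ of even length can only connect weights whose heights have the same parity, and paths of odd length can only connect weights whose heights have different parity.
   Context: A weight of type $(m,n)$ is a word $\lambda=\lambda_1\cdots\lambda_{m+n}$ in $\vee$ ("down") and $\wedge$ ("up") with $m$ letters $\vee$ and $n$ letters $\wedge$; $\Lambda_m^n$ is the set of weights. The height of $\lambda$ is $|\lambda|=\sum_{i:\lambda_i=\vee}\#\{j<i:\lambda_j=\wedge\}$. For $\lambda\in\Lambda_m^n$ let $\underline\lambda$ be the set of "cups" obtained by repeatedly pairing a $\vee$ with a $\wedge$ that are neighbours ($\vee$ on the left), ignoring positions already paired (positions on the line at which nested non-crossing lower semicircles are drawn); mirroring each cup above the line gives the closed circles of the degree-zero arc diagram $e_\lambda$. $\Gamma_m^n$ is the simple undirected graph with vertex set $\{e_\lambda\}_{\lambda\in\Lambda_m^n}$ and an edge between $e_\lambda$ and $e_\mu$ if one of $\lambda,\mu$ is obtained from the other by exchanging the labels at the two endpoints of one cup (i.e. of a $\vee\cdots\wedge$ pair lying on a single circle of $e_\lambda$, resp. $e_\mu$). *)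

theory Defs
  imports Main
begin

datatype letter = Down | Up   (* Down = \<vee>, Up = \<wedge> *)

type_synonym weight = "letter list"

definition weights :: "nat \<Rightarrow> nat \<Rightarrow> weight set" where
  "weights m n = {w. length w = m + n \<and> count_list w Down = m \<and> count_list w Up = n}"

definition height :: "weight \<Rightarrow> nat" where
  "height w = (\<Sum>i\<in>{i. i < length w \<and> w ! i = Down}. card {j. j < i \<and> w ! j = Up})"

(* cups of lambda: (i,j) is a cup iff w_i = Down, w_j = Up, i < j and every position
   strictly between i and j is already paired by a cup lying strictly between i and j,
   i.e. Down and Up become neighbours after ignoring already paired positions. *)
inductive cup :: "weight \<Rightarrow> nat \<Rightarrow> nat \<Rightarrow> bool" for w where
  "\<lbrakk> i < j; j < length w; w ! i = Down; w ! j = Up;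
     \<forall>k. i < k \<and> k < j \<longrightarrow> (\<exists>l. i < l \<and> l < j \<and> (cup w k l \<or> cup w l k)) \<rbrakk>
   \<Longrightarrow> cup w i j"

definition cup_swap :: "weight \<Rightarrow> weight \<Rightarrow> bool" where
  "cup_swap w v \<longleftrightarrow> (\<exists>i j. cup w i j \<and> v = w[i := Up, j := Down])"

(* edge relation of Gamma_m^n (vertices e_lambda identified with weights lambda) *)
definition Gamma_edge :: "nat \<Rightarrow> nat \<Rightarrow> weight \<Rightarrow> weight \<Rightarrow> bool" where
  "Gamma_edge m n w v \<longleftrightarrow> w \<in> weights m n \<and> v \<in> weights m n \<and> (cup_swap w v \<or> cup_swap v w)"

(* a path in Gamma_m^n given by its nonempty vertex list; its length is length ps - 1 *)
definition Gamma_path :: "nat \<Rightarrow> nat \<Rightarrow> weight list \<Rightarrow> bool" where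
  "Gamma_path m n ps \<longleftrightarrow> ps \<noteq> [] \<and> set ps \<subseteq> weights m n \<and>
     (\<forall>k. Suc k < length ps \<longrightarrow> Gamma_edge m n (ps ! k) (ps ! Suc k))"

end

theory Submission
  imports Defs
begin

(* The height of a weight with m letters Down is the sum of the positions of its Downs minus
   0 + 1 + ... + (m - 1), so exchanging the endpoints i < j of a cup raises the height by j - i.
   This distance is odd because a cup contains as many Downs as Ups: by induction over cups,
   every Up strictly inside the cup (i, j) closes a balanced cup starting after i, so the prefix
   sums of the signs (Down = 1, Up = -1) over the interior are nonnegative, and dually its suffix
   sums are nonpositive. Hence every edge changes the parity of the height. *)

fun letter_sign :: "letter \<Rightarrow> int" where
  "letter_sign Down = 1"
| "letter_sign Up = -1"

definition balance :: "weight \<Rightarrow> nat \<Rightarrow> nat \<Rightarrow> int" where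
  "balance w a b = (\<Sum>q = a..<b. letter_sign (w ! q))"

lemma balance_empty [simp]: "balance w a a = 0"
  by (simp add: balance_def)

lemma balance_split: "a \<le> b \<Longrightarrow> b \<le> c \<Longrightarrow> balance w a c = balance w a b + balance w b c"
  unfolding balance_def by (simp add: sum.atLeastLessThan_concat)

lemma balance_Suc_right: "a \<le> b \<Longrightarrow> balance w a (Suc b) = balance w a b + letter_sign (w ! b)"
  unfolding balance_def by simp

lemma balance_Suc_left: "a < b \<Longrightarrow> balance w a b = letter_sign (w ! a) + balance w (Suc a) b"
  using balance_split[of a "Suc a" b w] by (simp add: balance_def)

lemma even_balance_iff: "even (balance w a b) \<longleftrightarrow> even (b - a)"
proof -
  have "balance w a b + int (b - a) = (\<Sum>q = a..<b. letter_sign (w ! q) + 1)"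
    by (simp add: balance_def sum.distrib)
  moreover have "even (letter_sign x + 1)" for x
    by (cases x) simp_all
  ultimately have "even (balance w a b + int (b - a))"
    by (simp add: dvd_sum)
  then show ?thesis
    by simp
qed

lemma balance_nonneg_if_Ups_closed:
  assumes Ups_closed: "\<And>k. a \<le> k \<Longrightarrow> k < b \<Longrightarrow> w ! k = Up \<Longrightarrow>
                         \<exists>l. a \<le> l \<and> l < k \<and> balance w l (Suc k) = 0"
  shows "a \<le> p \<Longrightarrow> p \<le> b \<Longrightarrow> 0 \<le> balance w a p"
proof (induction p rule: less_induct)
  case (less p)
  show ?case
  proof (cases "p = a")
    case False
    with less.prems obtain q where p: "p = Suc q"
      by (cases p) auto
    with False less.prems have "a \<le> q" "q < b"
      by auto
    show ?thesis
    proof (cases "w ! q")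
      case Down
      then show ?thesis
        using less.IH[of q] \<open>a \<le> q\<close> \<open>q < b\<close> p by (simp add: balance_Suc_right)
    next
      case Up
      then obtain l where "a \<le> l" "l < q" "balance w l p = 0"
        using Ups_closed[of q] \<open>a \<le> q\<close> \<open>q < b\<close> p by auto
      then show ?thesis
        using less.IH[of l] less.prems p balance_split[of a l p w] by simp
    qed
  qed simp
qed

lemma balance_nonpos_if_Downs_closed:
  assumes Downs_closed: "\<And>k. a \<le> k \<Longrightarrow> k < b \<Longrightarrow> w ! k = Down \<Longrightarrow>
                           \<exists>l. k < l \<and> l < b \<and> balance w k (Suc l) = 0"
  shows "a \<le> p \<Longrightarrow> p \<le> b \<Longrightarrow> balance w p b \<le> 0"
proof (induction "b - p" arbitrary: p rule: less_induct)
  case less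
  show ?case
  proof (cases "p < b")
    case True
    show ?thesis
    proof (cases "w ! p")
      case Up
      have "b - Suc p < b - p"
        using True by simp
      then show ?thesis
        using less.hyps[of "Suc p"] less.prems True Up by (simp add: balance_Suc_left)
    next
      case Down
      then obtain l where "p < l" "l < b" "balance w p (Suc l) = 0"
        using Downs_closed[of p] less.prems True by auto
      then show ?thesis
        using less.hyps[of "Suc l"] less.prems balance_split[of p "Suc l" b w] by simp
    qed
  qed (use less.prems in simp)
qed

lemma cup_endpoints: "cup w i j \<Longrightarrow> i < j \<and> j < length w \<and> w ! i = Down \<and> w ! j = Up"
  by (induction rule: cup.induct) simp

lemma cup_balance: "cup w i j \<Longrightarrow> balance w i (Suc j) = 0"
proof (induction rule: cup.induct)
  case (1 i j)
  have Downs_closed: "\<exists>l. k < l \<and> l < j \<and> balance w k (Suc l) = 0"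
    if "Suc i \<le> k" "k < j" "w ! k = Down" for k
    using "1.IH" that cup_endpoints by (metis Suc_le_eq letter.distinct(1))
  have Ups_closed: "\<exists>l. Suc i \<le> l \<and> l < k \<and> balance w l (Suc k) = 0"
    if "Suc i \<le> k" "k < j" "w ! k = Up" for k
    using "1.IH" that cup_endpoints by (metis Suc_le_eq letter.distinct(1))
  have "0 \<le> balance w (Suc i) j"
    using balance_nonneg_if_Ups_closed[where a = "Suc i" and b = j and p = j] Ups_closed
      "1.hyps"(1) by simp
  moreover have "balance w (Suc i) j \<le> 0"
    using balance_nonpos_if_Downs_closed[where a = "Suc i" and b = j and p = "Suc i"] Downs_closed
      "1.hyps"(1) by simp
  ultimately show ?case
    using "1.hyps" balance_Suc_left[of i "Suc j" w] balance_Suc_right[of "Suc i" j w] by simp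
qed

lemma cup_distance_odd: "cup w i j \<Longrightarrow> odd (j - i)"
  using cup_balance[of w i j] even_balance_iff[of w i "Suc j"] cup_endpoints[of w i j]
  by (simp add: Suc_diff_le)

definition down_positions :: "weight \<Rightarrow> nat set" where
  "down_positions w = {i. i < length w \<and> w ! i = Down}"

lemma finite_down_positions [simp]: "finite (down_positions w)"
  by (simp add: down_positions_def)

lemma length_notin_down_positions [simp]: "length w \<notin> down_positions w"
  by (simp add: down_positions_def)

lemma card_down_positions: "card (down_positions w) = count_list w Down"
  by (simp add: down_positions_def count_list_eq_length_filter length_filter_conv_card eq_commute)

lemma count_list_Down_add_Up: "count_list w Down + count_list w Up = length w"
proof (induction w)
  case (Cons x w)
  then show ?case
    by (cases x) simp_all
qed simp

lemma down_positions_snoc: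
  "down_positions (w @ [x]) = down_positions w \<union> (if x = Down then {length w} else {})"
  by (auto simp: down_positions_def nth_append less_Suc_eq)

lemma height_snoc: "height (w @ [x]) = height w + (if x = Down then count_list w Up else 0)"
proof -
  have prefix_Ups: "card {j. j < i \<and> (w @ [x]) ! j = Up} = card {j. j < i \<and> w ! j = Up}"
    if "i \<le> length w" for i
    using that by (intro arg_cong[where f = card]) (auto simp: nth_append)
  have old_Downs: "(\<Sum>i \<in> down_positions w. card {j. j < i \<and> (w @ [x]) ! j = Up}) = height w"
    unfolding height_def down_positions_def by (rule sum.cong) (auto simp: prefix_Ups)
  have "height (w @ [x]) = (\<Sum>i \<in> down_positions (w @ [x]). card {j. j < i \<and> (w @ [x]) ! j = Up})"
    by (simp add: height_def down_positions_def)
  also have "\<dots> = height w + (if x = Down then card {j. j < length w \<and> w ! j = Up} else 0)"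
    using old_Downs prefix_Ups[of "length w"] by (cases x) (simp_all add: down_positions_snoc)
  also have "\<dots> = height w + (if x = Down then count_list w Up else 0)"
    by (simp add: count_list_eq_length_filter length_filter_conv_card eq_commute)
  finally show ?thesis .
qed

lemma height_add_sum_lessThan: "height w + (\<Sum>k < count_list w Down. k) = \<Sum>(down_positions w)"
proof (induction w rule: rev_induct)
  case Nil
  then show ?case
    by (simp add: height_def down_positions_def)
next
  case (snoc x w)
  then show ?case
    using count_list_Down_add_Up[of w]
    by (cases x) (simp_all add: height_snoc down_positions_snoc sum.union_disjoint)
qed

lemma height_list_update_Down_Up:
  assumes "i < j" "j < length w" "w ! i = Down" "w ! j = Up"
  shows "height (w[i := Up, j := Down]) = height w + (j - i)"
proof -
  define v where "v = w[i := Up, j := Down]"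
  have i_mem: "i \<in> down_positions w" and j_nmem: "j \<notin> down_positions w"
    using assms by (auto simp: down_positions_def)
  have down_v: "down_positions v = insert j (down_positions w - {i})"
    using assms by (auto simp: v_def down_positions_def nth_list_update)
  have "card (down_positions v) = Suc (card (down_positions w - {i}))"
    using j_nmem by (simp add: down_v)
  also have "\<dots> = card (down_positions w)"
    by (rule card.remove[OF finite_down_positions i_mem, symmetric])
  finally have "count_list v Down = count_list w Down"
    by (simp add: card_down_positions)
  moreover have "\<Sum>(down_positions v) = j + \<Sum>(down_positions w - {i})"
    using j_nmem by (simp add: down_v)
  moreover have "\<Sum>(down_positions w) = i + \<Sum>(down_positions w - {i})"
    by (rule sum.remove[OF finite_down_positions i_mem])
  ultimately have "height v + i = height w + j"
    using height_add_sum_lessThan[of v] height_add_sum_lessThan[of w] by simp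
  then show ?thesis
    using assms(1) by (simp add: v_def)
qed

lemma cup_swap_height_parity: "cup_swap w v \<Longrightarrow> even (height v) \<longleftrightarrow> odd (height w)"
  unfolding cup_swap_def
  using cup_endpoints cup_distance_odd height_list_update_Down_Up by fastforce

lemma Gamma_edge_height_parity: "Gamma_edge m n w v \<Longrightarrow> even (height w) \<longleftrightarrow> odd (height v)"
  unfolding Gamma_edge_def using cup_swap_height_parity by blast

lemma Gamma_path_Cons_Cons:
  "Gamma_path m n (x # y # ps) \<longleftrightarrow> Gamma_edge m n x y \<and> Gamma_path m n (y # ps)"
  unfolding Gamma_path_def
proof (intro iffI conjI; (elim conjE)?)
  assume "\<forall>k. Suc k < length (x # y # ps) \<longrightarrow> Gamma_edge m n ((x # y # ps) ! k) ((x # y # ps) ! Suc k)"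
  from this[rule_format, of 0] show "Gamma_edge m n x y" by simp
qed (auto simp: Gamma_edge_def less_Suc_eq_0_disj)

lemma Gamma_path_height_parity:
  "Gamma_path m n ps \<Longrightarrow>
     (even (height (hd ps)) \<longleftrightarrow> even (height (last ps))) \<longleftrightarrow> even (length ps - 1)"
proof (induction ps rule: induct_list012)
  case (3 x y ps)
  then have "Gamma_edge m n x y" and "Gamma_path m n (y # ps)"
    by (simp_all add: Gamma_path_Cons_Cons)
  then have "even (height x) \<longleftrightarrow> odd (height y)"
    and "(even (height y) \<longleftrightarrow> even (height (last (y # ps)))) \<longleftrightarrow> even (length ps)"
    using "3.IH"(2) Gamma_edge_height_parity by simp_all
  then show ?case
    by (cases "even (height y)"; cases "even (height (last (y # ps)))")
      (simp_all del: last.simps add: last_ConsR)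
qed (simp_all add: Gamma_path_def)

theorem proposition2p6:
  fixes m n :: nat
  assumes "m \<ge> 1" and "n \<ge> 1"
  shows "(\<forall>w v. Gamma_edge m n w v \<longrightarrow> (even (height w) \<longleftrightarrow> odd (height v)))
    \<and> (\<forall>ps. Gamma_path m n ps \<longrightarrow>
          (even (length ps - 1) \<longrightarrow> (even (height (hd ps)) \<longleftrightarrow> even (height (last ps))))
        \<and> (odd (length ps - 1) \<longrightarrow> (even (height (hd ps)) \<longleftrightarrow> odd (height (last ps)))))"
proof (intro conjI allI impI)
  fix w v
  assume "Gamma_edge m n w v"
  then show "even (height w) \<longleftrightarrow> odd (height v)"
    by (rule Gamma_edge_height_parity)
next
  fix ps
  assume "Gamma_path m n ps"
  then have parity: "(even (height (hd ps)) \<longleftrightarrow> even (height (last ps))) \<longleftrightarrow> even (length ps - 1)"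
    by (rule Gamma_path_height_parity)
  show "even (height (hd ps)) \<longleftrightarrow> even (height (last ps))" if "even (length ps - 1)"
    using parity that by argo
  show "even (height (hd ps)) \<longleftrightarrow> odd (height (last ps))" if "odd (length ps - 1)"
    using parity that by argo
qed

end
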